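(* For every $n\ge 2$, $N(n)$ is even.
   Context: A semi-Heyting algebra is an algebra $\langle L,\vee,\wedge,\to,0,1\rangle$ such that: (SH1) $\langle L,\vee,\wedge,0,1\rangle$ is a bounded lattice with least element $0$ and greatest element $1$; (SH2) $x\wedge(x\to y)=x\wedge y$; (SH3) $x\wedge(y\to z)=x\wedge[(x\wedge y)\to(x\wedge z)]$; (SH4) $x\to x=1$, for all $x,y,z\in L$. For $n\ge 1$, $C_n$ denotes the chain $a_0<a_1<\cdots<a_{n-1}$ with $0=a_0$, $1=a_{n-1}$ (for $n=1$, $0=1$), with $\wedge=\min$, $\vee=\max$. $N(n)$ denotes the number of binary operations $\to$ on $C_n$ such that $\langle C_n,\vee,\wedge,\to,0,1\rangle$ is a semi-Heyting algebra. *)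

theory Defs
  imports Main
begin

text \<open>The chain C_n is modelled by the carrier {0..<n} of naturals, with a_i = i,
  meet = min, join = max, 0 = 0, 1 = n - 1.  A binary operation on C_n is a function
  nat => nat => nat mapping {0..<n} x {0..<n} into {0..<n}; to count operations
  (rather than their arbitrary extensions outside the carrier) we require the
  function to be 0 outside the carrier.\<close>

definition is_chain_op :: "nat \<Rightarrow> (nat \<Rightarrow> nat \<Rightarrow> nat) \<Rightarrow> bool" where
  "is_chain_op n imp \<longleftrightarrow>
     (\<forall>x y. x < n \<and> y < n \<longrightarrow> imp x y < n) \<and>
     (\<forall>x y. \<not> (x < n \<and> y < n) \<longrightarrow> imp x y = 0)"

text \<open>(SH1) holds automatically for the chain (min/max bounded lattice).\<close>
definition semi_heyting_chain :: "nat \<Rightarrow> (nat \<Rightarrow> nat \<Rightarrow> nat) \<Rightarrow> bool" where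
  "semi_heyting_chain n imp \<longleftrightarrow>
     (\<forall>x y. x < n \<and> y < n \<longrightarrow> min x (imp x y) = min x y) \<and>
     (\<forall>x y z. x < n \<and> y < n \<and> z < n \<longrightarrow>
         min x (imp y z) = min x (imp (min x y) (min x z))) \<and>
     (\<forall>x. x < n \<longrightarrow> imp x x = n - 1)"

definition N :: "nat \<Rightarrow> nat" where
  "N n = card {imp. is_chain_op n imp \<and> semi_heyting_chain n imp}"

end

theory Submission
  imports Defs "HOL-Library.Z2" "HOL-Library.Disjoint_Sets"
begin

text \<open>Let c be the coatom of the chain. By (SH2) the value c \<rightarrow> 1 is either c or 1, and the
  other choice again gives a semi-Heyting algebra: the only nontrivial instance of (SH3) that
  sees c \<rightarrow> 1 has x \<le> c, and there x \<and> (c \<rightarrow> 1) = x for either choice. Toggling c \<rightarrow> 1 is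
  therefore a fixed-point-free involution on the semi-Heyting operations of the chain.\<close>

lemma even_card_involution:
  assumes "\<And>x. x \<in> X \<Longrightarrow> h x \<in> X" "\<And>x. x \<in> X \<Longrightarrow> h (h x) = x"
    and "\<And>x. x \<in> X \<Longrightarrow> h x \<noteq> x"
  shows "even (card X)"
proof -
  \<comment> \<open>Count in characteristic 2, where pairing x with h x cancels.\<close>
  have "(\<Sum>x\<in>X. 1 :: bit) = 0"
    by (rule sum_involution_eq_0[where h = h]) (use assms in auto)
  then have "(of_nat (card X) :: bit) = 0"
    by simp
  then show ?thesis
    using even_of_nat_iff[of "card X", where 'a = bit] by simp
qed

definition toggle_coatom_top :: "nat \<Rightarrow> (nat \<Rightarrow> nat \<Rightarrow> nat) \<Rightarrow> nat \<Rightarrow> nat \<Rightarrow> nat" where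
  "toggle_coatom_top n imp =
     (\<lambda>x y. if x = n - 2 \<and> y = n - 1 then (if imp x y = n - 1 then n - 2 else n - 1)
            else imp x y)"

lemma toggle_coatom_top_other:
  "\<not> (x = n - 2 \<and> y = n - 1) \<Longrightarrow> toggle_coatom_top n imp x y = imp x y"
  unfolding toggle_coatom_top_def by presburger

lemma semi_heyting_chain_coatom_imp_top:
  assumes "n \<ge> 2" "is_chain_op n imp" "semi_heyting_chain n imp"
  shows "imp (n - 2) (n - 1) = n - 2 \<or> imp (n - 2) (n - 1) = n - 1"
proof -
  have "min (n - 2) (imp (n - 2) (n - 1)) = n - 2" "imp (n - 2) (n - 1) < n"
    using assms unfolding semi_heyting_chain_def is_chain_op_def by auto
  then show ?thesis
    by (simp add: min_def split: if_splits) linarith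
qed

lemma toggle_coatom_top_involutive:
  assumes "imp (n - 2) (n - 1) = n - 2 \<or> imp (n - 2) (n - 1) = n - 1" "n \<ge> 2"
  shows "toggle_coatom_top n (toggle_coatom_top n imp) = imp"
  using assms by (auto simp: toggle_coatom_top_def intro!: ext)

lemma toggle_coatom_top_neq:
  assumes "n \<ge> 2"
  shows "toggle_coatom_top n imp \<noteq> imp"
proof
  assume "toggle_coatom_top n imp = imp"
  then have "toggle_coatom_top n imp (n - 2) (n - 1) = imp (n - 2) (n - 1)"
    by simp
  with assms show False
    by (auto simp: toggle_coatom_top_def split: if_splits)
qed

lemma is_chain_op_toggle_coatom_top:
  assumes "n \<ge> 2" "is_chain_op n imp"
  shows "is_chain_op n (toggle_coatom_top n imp)"
  using assms unfolding is_chain_op_def toggle_coatom_top_def by auto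

lemma semi_heyting_chain_toggle_coatom_top:
  assumes n: "n \<ge> 2" and op: "is_chain_op n imp" and sh: "semi_heyting_chain n imp"
  shows "semi_heyting_chain n (toggle_coatom_top n imp)"
proof -
  define t where "t = toggle_coatom_top n imp"
  have sh2: "\<And>x y. x < n \<Longrightarrow> y < n \<Longrightarrow> min x (imp x y) = min x y"
    and sh3: "\<And>x y z. x < n \<Longrightarrow> y < n \<Longrightarrow> z < n \<Longrightarrow>
                min x (imp y z) = min x (imp (min x y) (min x z))"
    and sh4: "\<And>x. x < n \<Longrightarrow> imp x x = n - 1"
    using sh unfolding semi_heyting_chain_def by auto
  have coatom: "imp (n - 2) (n - 1) = n - 2 \<or> imp (n - 2) (n - 1) = n - 1"
    using semi_heyting_chain_coatom_imp_top[OF n op sh] .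
  have "min x (t y z) = min x (t (min x y) (min x z))"
    if xyz: "x < n" "y < n" "z < n" for x y z
  proof (cases "x = n - 1")
    case True
    with xyz have "min x y = y" "min x z = z" by auto
    then show ?thesis by simp
  next
    case False
    with xyz have x_le: "x \<le> n - 2" by linarith
    show ?thesis
    proof (cases "y = n - 2 \<and> z = n - 1")
      case True
      with x_le n have "min x y = x" "min x z = x" by auto
      with True x_le n coatom sh4[OF \<open>x < n\<close>] show ?thesis
        by (auto simp: t_def toggle_coatom_top_def)
    next
      case False
      moreover have "\<not> (min x y = n - 2 \<and> min x z = n - 1)"
        using x_le n by auto
      ultimately show ?thesis
        using sh3[OF xyz] unfolding t_def by (metis toggle_coatom_top_other)
    qed
  qed
  moreover have "min x (t x y) = min x y" "t x x = n - 1" if "x < n" "y < n" for x y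
    using sh2[OF that] sh4[OF \<open>x < n\<close>] n by (auto simp: t_def toggle_coatom_top_def)
  ultimately show ?thesis
    unfolding semi_heyting_chain_def t_def by blast
qed

theorem mainTheorem4:
  fixes n :: nat
  assumes "n \<ge> 2"
  shows "even (N n)"
  unfolding N_def
proof (rule even_card_involution[where h = "toggle_coatom_top n"], goal_cases)
  case (1 imp)
  then show ?case
    using assms is_chain_op_toggle_coatom_top semi_heyting_chain_toggle_coatom_top by blast
next
  case (2 imp)
  then show ?case
    using assms semi_heyting_chain_coatom_imp_top toggle_coatom_top_involutive by blast
next
  case (3 imp)
  then show ?case
    using assms toggle_coatom_top_neq by blast
qed

end
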